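(* Consider the following model. A principal P and an agent A interact over two periods $t\in\{1,2\}$. States $\omega_t\in\{0,1\}$ satisfy $\Pr[\omega_1=1]=\mu_0\in(0,1)$ and $\Pr[\omega_2=\omega\mid\omega_1=\omega]=\rho\in(1/2,1)$. In each period A chooses $e_t\in\{0,1\}$; if $e_t=1$ he observes $\omega_t$, and here if $e_t=0$ he observes nothing (i.e., the free-revelation probability is $\pi=0$). A reports $r_t\in\{\varnothing,\omega_t\}$ if he observed $\omega_t$, else $r_t=\varnothing$. P chooses $x=\hat x(r_1,r_2)$ at the end of period 2. Payoffs: P gets $\mathbb{1}[x=\omega_2]-k(e_1+e_2)$, A gets $x-c(e_1+e_2)$, $c,k>0$; A best-responds, following the recommendation and disclosing when indifferent. Let $\kappa=k/(1-\pi)=k$, $\gamma=c/(1-\pi)=c$, $\mu_2(\varnothing)=\rho\mu_0+(1-\rho)(1-\mu_0)$, and assume $\kappa\in(1-\rho,\min\{\mu_2(\varnothing),1-\mu_2(\varnothing)\}]$ and $\gamma\le\mu_2(\varnothing)$. Then the mechanism with $\sigma_1=0$, $\sigma_2(r_1)=\mathbb{1}[r_1=\varnothing]$ and $\hat x(r_1,r_2)=\mathbb{1}[r_1=\varnothing]\mathbb{1}[r_2=1]$ generates the same outcomes as the baseline mechanism, and therefore it is optimal.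
   Context: The baseline mechanism is the one P would choose if she controlled testing directly and observed all results: for this range of $\kappa$ it does not test in period 1, tests in period 2 when no period-1 result was obtained, and assigns efficiently ($x=1$ iff the posterior probability of $\omega_2=1$ is at least $1/2$); with $\pi=0$ it therefore tests only in period 2 and sets $x=\omega_2$. *)

theory Defs
  imports Complex_Main
begin

text \<open>Two-period testing model with free-revelation probability pi = 0.
  States omega_1, omega_2 are booleans (True = 1). Reports are "bool option":
  None is the empty report, Some w discloses the observed state w.\<close>

type_synonym report = "bool option"

record mech =
  sig1 :: real
  sig2 :: "report \<Rightarrow> real"
  xhat :: "report \<Rightarrow> report \<Rightarrow> bool"

definition valid_mech :: "mech \<Rightarrow> bool" where
  "valid_mech M \<longleftrightarrow> 0 \<le> sig1 M \<and> sig1 M \<le> 1 \<and> (\<forall>r. 0 \<le> sig2 M r \<and> sig2 M r \<le> 1)"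

text \<open>A (pure) strategy of the agent. a_t is the recommendation received in period t,
  o_t the observation in period t (None if no test). The disclosure choice decides whether
  the report is the observation or the empty report, so r_t \<in> {empty, omega_t} if observed
  and r_t = empty otherwise.\<close>
record strat =
  act1  :: "bool \<Rightarrow> bool"
  disc1 :: "bool \<Rightarrow> bool option \<Rightarrow> bool"
  act2  :: "bool \<Rightarrow> bool option \<Rightarrow> bool \<Rightarrow> bool"
  disc2 :: "bool \<Rightarrow> bool option \<Rightarrow> bool \<Rightarrow> bool option \<Rightarrow> bool"

definition bprob :: "real \<Rightarrow> bool \<Rightarrow> real" where
  "bprob p b = (if b then p else 1 - p)"

definition prior :: "real \<Rightarrow> real \<Rightarrow> bool \<Rightarrow> bool \<Rightarrow> real" where
  "prior mu0 rho w1 w2 = bprob mu0 w1 * (if w2 = w1 then rho else 1 - rho)"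

definition mu2_empty :: "real \<Rightarrow> real \<Rightarrow> real" where
  "mu2_empty mu0 rho = rho * mu0 + (1 - rho) * (1 - mu0)"

definition expect :: "real \<Rightarrow> real \<Rightarrow> mech \<Rightarrow> strat \<Rightarrow>
    (bool \<Rightarrow> bool \<Rightarrow> bool \<Rightarrow> bool \<Rightarrow> bool \<Rightarrow> real) \<Rightarrow> real" where
  "expect mu0 rho M s f =
    (\<Sum>w1\<in>UNIV. \<Sum>w2\<in>UNIV. \<Sum>a1\<in>UNIV. \<Sum>a2\<in>UNIV.
      (let e1 = act1 s a1;
           o1 = (if e1 then Some w1 else None);
           r1 = (if disc1 s a1 o1 then o1 else None);
           e2 = act2 s a1 o1 a2;
           o2 = (if e2 then Some w2 else None);
           r2 = (if disc2 s a1 o1 a2 o2 then o2 else None);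
           x = xhat M r1 r2
       in prior mu0 rho w1 w2 * bprob (sig1 M) a1 * bprob (sig2 M r1) a2 * f w1 w2 e1 e2 x))"

definition UA :: "real \<Rightarrow> real \<Rightarrow> real \<Rightarrow> mech \<Rightarrow> strat \<Rightarrow> real" where
  "UA mu0 rho c M s = expect mu0 rho M s
     (\<lambda>w1 w2 e1 e2 x. of_bool x - c * (of_bool e1 + of_bool e2))"

definition UP :: "real \<Rightarrow> real \<Rightarrow> real \<Rightarrow> mech \<Rightarrow> strat \<Rightarrow> real" where
  "UP mu0 rho k M s = expect mu0 rho M s
     (\<lambda>w1 w2 e1 e2 x. of_bool (x = w2) - k * (of_bool e1 + of_bool e2))"

definition best_response :: "real \<Rightarrow> real \<Rightarrow> real \<Rightarrow> mech \<Rightarrow> strat \<Rightarrow> bool" where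
  "best_response mu0 rho c M s \<longleftrightarrow> (\<forall>s'. UA mu0 rho c M s' \<le> UA mu0 rho c M s)"

definition outcome_prob :: "real \<Rightarrow> real \<Rightarrow> mech \<Rightarrow> strat \<Rightarrow>
    bool \<times> bool \<times> bool \<times> bool \<times> bool \<Rightarrow> real" where
  "outcome_prob mu0 rho M s oc = expect mu0 rho M s
     (\<lambda>w1 w2 e1 e2 x. of_bool ((w1, w2, e1, e2, x) = oc))"

text \<open>Outcome distribution of the baseline mechanism in this parameter range (pi = 0):
  no test in period 1, test in period 2, x = omega_2.\<close>
definition baseline_prob :: "real \<Rightarrow> real \<Rightarrow> bool \<times> bool \<times> bool \<times> bool \<times> bool \<Rightarrow> real" where
  "baseline_prob mu0 rho oc = (case oc of (w1, w2, e1, e2, x) \<Rightarrow>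
     prior mu0 rho w1 w2 * of_bool (\<not> e1 \<and> e2 \<and> x = w2))"

definition obedient :: strat where
  "obedient = \<lparr>act1 = (\<lambda>a. a), disc1 = (\<lambda>_ _. True),
               act2 = (\<lambda>_ _ a. a), disc2 = (\<lambda>_ _ _ _. True)\<rparr>"

definition Mstar :: mech where
  "Mstar = \<lparr>sig1 = 0, sig2 = (\<lambda>r1. if r1 = None then 1 else 0),
            xhat = (\<lambda>r1 r2. r1 = None \<and> r2 = Some True)\<rparr>"

end

theory Submission
  imports Defs
begin

text \<open>No mechanism can give P more than the first-best value \<open>1 - k\<close>: without any test her
  guess of \<open>\<omega>\<^sub>2\<close> is right with probability \<open>max \<mu>\<^sub>2(\<emptyset>) (1 - \<mu>\<^sub>2(\<emptyset>)) \<le> 1 - k\<close>, with a test in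
  period 1 only it is right with probability at most \<open>\<rho>\<close> while costing \<open>k\<close>, and two tests
  cost \<open>2k\<close>. Under \<open>M\<^sup>*\<close> the agent gets \<open>x = 1\<close> only by testing in period 2 and disclosing
  \<open>\<omega>\<^sub>2 = 1\<close>, and his testing decisions cannot depend on the states, so no strategy earns him
  more than \<open>\<mu>\<^sub>2(\<emptyset>) - c\<close>. Obedience earns him exactly that and gives P the value \<open>1 - k\<close>.\<close>

lemma sum_UNIV_bool: "(\<Sum>b\<in>UNIV. f b) = f True + f False"
  by (simp add: UNIV_bool add.commute)

lemma bprob_nonneg: "0 \<le> p \<Longrightarrow> p \<le> 1 \<Longrightarrow> 0 \<le> bprob p b"
  by (simp add: bprob_def)

lemma sum_bprob_mult_le:
  fixes F :: "bool \<Rightarrow> real"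
  assumes "0 \<le> p" "p \<le> 1" "\<And>a. F a \<le> B"
  shows "(\<Sum>a\<in>UNIV. bprob p a * F a) \<le> B"
proof -
  have "p * F True \<le> p * B" "(1 - p) * F False \<le> (1 - p) * B"
    using assms by (simp_all add: mult_left_mono)
  then show ?thesis by (simp add: sum_UNIV_bool bprob_def algebra_simps)
qed

lemma sum_bprob_mult_const: "(\<Sum>a\<in>UNIV. bprob p a * (B::real)) = B"
  by (simp add: sum_UNIV_bool bprob_def algebra_simps)

lemma sum_bprob_0: "(\<Sum>a\<in>UNIV. bprob 0 a * (F a::real)) = F False"
  by (simp add: sum_UNIV_bool bprob_def)

lemma sum_bprob_1: "(\<Sum>a\<in>UNIV. bprob 1 a * (F a::real)) = F True"
  by (simp add: sum_UNIV_bool bprob_def)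

lemma prior_nonneg: "0 \<le> mu0 \<Longrightarrow> mu0 \<le> 1 \<Longrightarrow> 0 \<le> rho \<Longrightarrow> rho \<le> 1 \<Longrightarrow> 0 \<le> prior mu0 rho w1 w2"
  by (simp add: prior_def bprob_def)

lemma sum_prior_mult_mono:
  fixes F G :: "bool \<Rightarrow> real"
  assumes "0 \<le> mu0" "mu0 \<le> 1" "0 \<le> rho" "rho \<le> 1" "\<And>w2. F w2 \<le> G w2"
  shows "(\<Sum>w2\<in>UNIV. prior mu0 rho w1 w2 * F w2) \<le> (\<Sum>w2\<in>UNIV. prior mu0 rho w1 w2 * G w2)"
  by (rule sum_mono, rule mult_left_mono) (use assms prior_nonneg in auto)

lemma sum_prior_mult_const: "(\<Sum>w2\<in>UNIV. prior mu0 rho w1 w2 * (B::real)) = bprob mu0 w1 * B"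
  by (simp add: sum_UNIV_bool prior_def algebra_simps)

lemma sum_prior_mult_mono2:
  fixes F G :: "bool \<Rightarrow> bool \<Rightarrow> real"
  assumes "0 \<le> mu0" "mu0 \<le> 1" "0 \<le> rho" "rho \<le> 1" "\<And>w1 w2. F w1 w2 \<le> G w1 w2"
  shows "(\<Sum>w1\<in>UNIV. \<Sum>w2\<in>UNIV. prior mu0 rho w1 w2 * F w1 w2)
    \<le> (\<Sum>w1\<in>UNIV. \<Sum>w2\<in>UNIV. prior mu0 rho w1 w2 * G w1 w2)"
  by (intro sum_mono sum_prior_mult_mono assms)

lemma sum_prior_mult_const2: "(\<Sum>w1\<in>UNIV. \<Sum>w2\<in>UNIV. prior mu0 rho w1 w2 * (B::real)) = B"
  by (simp add: sum_prior_mult_const sum_bprob_mult_const)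

lemma sum_prior_of_bool_state2_minus:
  "(\<Sum>w1\<in>UNIV. \<Sum>w2\<in>UNIV. prior mu0 rho w1 w2 * (of_bool w2 - c)) = mu2_empty mu0 rho - c"
  by (simp add: sum_UNIV_bool prior_def bprob_def mu2_empty_def algebra_simps)

lemma prob_guess_uninformed:
  "(\<Sum>w1\<in>UNIV. \<Sum>w2\<in>UNIV. prior mu0 rho w1 w2 * of_bool (x = w2)) = bprob (mu2_empty mu0 rho) x"
  by (cases x) (simp_all add: sum_UNIV_bool prior_def bprob_def mu2_empty_def algebra_simps)

lemma prob_guess_given_state1_le:
  assumes "1/2 \<le> rho" "0 \<le> mu0" "mu0 \<le> 1"
  shows "(\<Sum>w2\<in>UNIV. prior mu0 rho w1 w2 * of_bool (x = w2)) \<le> bprob mu0 w1 * rho"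
proof -
  have "(\<Sum>w2\<in>UNIV. prior mu0 rho w1 w2 * of_bool (x = w2))
      = bprob mu0 w1 * (if x = w1 then rho else 1 - rho)"
    by (cases x; cases w1) (simp_all add: sum_UNIV_bool prior_def)
  also have "\<dots> \<le> bprob mu0 w1 * rho"
    using assms by (intro mult_left_mono) (auto simp: bprob_def)
  finally show ?thesis .
qed

definition observe :: "bool \<Rightarrow> bool \<Rightarrow> report" where
  "observe e w = (if e then Some w else None)"

definition report1 :: "strat \<Rightarrow> bool \<Rightarrow> bool \<Rightarrow> report" where
  "report1 s a1 w1 = (let o1 = observe (act1 s a1) w1 in if disc1 s a1 o1 then o1 else None)"

definition report2 :: "strat \<Rightarrow> bool \<Rightarrow> report \<Rightarrow> bool \<Rightarrow> bool \<Rightarrow> report" where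
  "report2 s a1 o1 a2 w2 =
    (let o2 = observe (act2 s a1 o1 a2) w2 in if disc2 s a1 o1 a2 o2 then o2 else None)"

lemma report2_untested: "\<not> act2 s a1 o1 a2 \<Longrightarrow> report2 s a1 o1 a2 w2 = None"
  by (simp add: report2_def observe_def)

definition expect_state2 :: "real \<Rightarrow> real \<Rightarrow> mech \<Rightarrow> strat \<Rightarrow>
    (bool \<Rightarrow> bool \<Rightarrow> bool \<Rightarrow> bool \<Rightarrow> bool \<Rightarrow> real) \<Rightarrow> bool \<Rightarrow> bool \<Rightarrow> bool \<Rightarrow> real" where
  "expect_state2 mu0 rho M s f a1 w1 a2 =
    (let o1 = observe (act1 s a1) w1 in
     \<Sum>w2\<in>UNIV. prior mu0 rho w1 w2 *
       f w1 w2 (act1 s a1) (act2 s a1 o1 a2) (xhat M (report1 s a1 w1) (report2 s a1 o1 a2 w2)))"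

definition expect_given_rec1 :: "real \<Rightarrow> real \<Rightarrow> mech \<Rightarrow> strat \<Rightarrow>
    (bool \<Rightarrow> bool \<Rightarrow> bool \<Rightarrow> bool \<Rightarrow> bool \<Rightarrow> real) \<Rightarrow> bool \<Rightarrow> real" where
  "expect_given_rec1 mu0 rho M s f a1 =
    (\<Sum>w1\<in>UNIV. \<Sum>a2\<in>UNIV. bprob (sig2 M (report1 s a1 w1)) a2 * expect_state2 mu0 rho M s f a1 w1 a2)"

lemma expect_by_rec1:
  "expect mu0 rho M s f = (\<Sum>a1\<in>UNIV. bprob (sig1 M) a1 * expect_given_rec1 mu0 rho M s f a1)"
  unfolding expect_def expect_given_rec1_def expect_state2_def report1_def report2_def observe_def Let_def
  by (simp add: sum_UNIV_bool algebra_simps)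

lemma expect_given_rec1_le:
  assumes "\<And>r. 0 \<le> sig2 M r" "\<And>r. sig2 M r \<le> 1"
    and "\<And>w1 a2. expect_state2 mu0 rho M s f a1 w1 a2 \<le> (\<Sum>w2\<in>UNIV. prior mu0 rho w1 w2 * g w1 w2)"
  shows "expect_given_rec1 mu0 rho M s f a1 \<le> (\<Sum>w1\<in>UNIV. \<Sum>w2\<in>UNIV. prior mu0 rho w1 w2 * g w1 w2)"
  unfolding expect_given_rec1_def
  by (intro sum_mono sum_bprob_mult_le assms)

lemma expect_given_rec1_untested:
  assumes "\<not> act1 s a1"
  shows "expect_given_rec1 mu0 rho M s f a1 = (\<Sum>a2\<in>UNIV. bprob (sig2 M None) a2 *
    (\<Sum>w1\<in>UNIV. \<Sum>w2\<in>UNIV. prior mu0 rho w1 w2 *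
       f w1 w2 False (act2 s a1 None a2) (xhat M None (report2 s a1 None a2 w2))))"
proof -
  have "observe (act1 s a1) w1 = None" "report1 s a1 w1 = None" for w1
    using assms by (simp_all add: observe_def report1_def)
  then show ?thesis
    unfolding expect_given_rec1_def expect_state2_def Let_def
    by (simp add: assms sum_UNIV_bool algebra_simps)
qed

definition payoff_P :: "real \<Rightarrow> bool \<Rightarrow> bool \<Rightarrow> bool \<Rightarrow> bool \<Rightarrow> bool \<Rightarrow> real" where
  "payoff_P k w1 w2 e1 e2 x = of_bool (x = w2) - k * (of_bool e1 + of_bool e2)"

lemma UP_eq_expect: "UP mu0 rho k M s = expect mu0 rho M s (payoff_P k)"
  unfolding UP_def payoff_P_def ..

lemma expect_given_rec1_payoff_P_tested:
  assumes "\<And>r. 0 \<le> sig2 M r" "\<And>r. sig2 M r \<le> 1"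
    and "0 \<le> mu0" "mu0 \<le> 1" "1/2 \<le> rho" "rho \<le> 1" "0 \<le> k" and "act1 s a1"
  shows "expect_given_rec1 mu0 rho M s (payoff_P k) a1 \<le> 1 - k"
proof -
  have "expect_state2 mu0 rho M s (payoff_P k) a1 w1 a2 \<le> (\<Sum>w2\<in>UNIV. prior mu0 rho w1 w2 * (1 - k))"
    for w1 a2
  proof (cases "act2 s a1 (observe (act1 s a1) w1) a2")
    case True
    then show ?thesis
      unfolding expect_state2_def Let_def
      by (intro sum_prior_mult_mono) (use assms in \<open>auto simp: payoff_P_def\<close>)
  next
    case False
    let ?x = "xhat M (report1 s a1 w1) None"
    have "expect_state2 mu0 rho M s (payoff_P k) a1 w1 a2
        = (\<Sum>w2\<in>UNIV. prior mu0 rho w1 w2 * of_bool (?x = w2)) - bprob mu0 w1 * k"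
      using False \<open>act1 s a1\<close>
      by (simp add: expect_state2_def payoff_P_def report2_untested sum_UNIV_bool prior_def algebra_simps)
    also have "\<dots> \<le> bprob mu0 w1 * rho - bprob mu0 w1 * k"
      using prob_guess_given_state1_le assms by simp
    also have "\<dots> \<le> bprob mu0 w1 * (1 - k)"
      using assms bprob_nonneg[of mu0 w1] by (simp add: mult_left_mono right_diff_distrib[symmetric])
    finally show ?thesis by (simp add: sum_prior_mult_const)
  qed
  then have "expect_given_rec1 mu0 rho M s (payoff_P k) a1
      \<le> (\<Sum>w1\<in>UNIV. \<Sum>w2\<in>UNIV. prior mu0 rho w1 w2 * (1 - k))"
    by (rule expect_given_rec1_le[OF assms(1,2)])
  then show ?thesis by (simp only: sum_prior_mult_const2)
qed

lemma expect_given_rec1_payoff_P_untested: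
  assumes "\<And>r. 0 \<le> sig2 M r" "\<And>r. sig2 M r \<le> 1"
    and "0 \<le> mu0" "mu0 \<le> 1" "0 \<le> rho" "rho \<le> 1" "0 \<le> k"
    and "k \<le> min (mu2_empty mu0 rho) (1 - mu2_empty mu0 rho)" and "\<not> act1 s a1"
  shows "expect_given_rec1 mu0 rho M s (payoff_P k) a1 \<le> 1 - k"
  unfolding expect_given_rec1_untested[OF \<open>\<not> act1 s a1\<close>]
proof (rule sum_bprob_mult_le[OF assms(1,2)])
  fix a2
  let ?e2 = "act2 s a1 None a2"
  show "(\<Sum>w1\<in>UNIV. \<Sum>w2\<in>UNIV. prior mu0 rho w1 w2 *
      payoff_P k w1 w2 False ?e2 (xhat M None (report2 s a1 None a2 w2))) \<le> 1 - k"
  proof (cases ?e2)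
    case True
    have "(\<Sum>w1\<in>UNIV. \<Sum>w2\<in>UNIV. prior mu0 rho w1 w2 *
        payoff_P k w1 w2 False ?e2 (xhat M None (report2 s a1 None a2 w2)))
      \<le> (\<Sum>w1\<in>UNIV. \<Sum>w2\<in>UNIV. prior mu0 rho w1 w2 * (1 - k))"
      by (intro sum_prior_mult_mono2) (use assms True in \<open>auto simp: payoff_P_def\<close>)
    then show ?thesis by (simp only: sum_prior_mult_const2)
  next
    case False
    let ?x = "xhat M None None"
    have "(\<Sum>w1\<in>UNIV. \<Sum>w2\<in>UNIV. prior mu0 rho w1 w2 *
        payoff_P k w1 w2 False ?e2 (xhat M None (report2 s a1 None a2 w2)))
      = (\<Sum>w1\<in>UNIV. \<Sum>w2\<in>UNIV. prior mu0 rho w1 w2 * of_bool (?x = w2))"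
      using False by (simp add: payoff_P_def report2_untested)
    also have "\<dots> = bprob (mu2_empty mu0 rho) ?x"
      by (rule prob_guess_uninformed)
    also have "\<dots> \<le> 1 - k"
      using assms(8) by (auto simp: bprob_def)
    finally show ?thesis .
  qed
qed

lemma UP_le_first_best:
  assumes "valid_mech M" "0 \<le> mu0" "mu0 \<le> 1" "1/2 \<le> rho" "rho \<le> 1" "0 \<le> k"
    and "k \<le> min (mu2_empty mu0 rho) (1 - mu2_empty mu0 rho)"
  shows "UP mu0 rho k M s \<le> 1 - k"
proof -
  have sig1: "0 \<le> sig1 M" "sig1 M \<le> 1" and sig2: "\<And>r. 0 \<le> sig2 M r" "\<And>r. sig2 M r \<le> 1"
    using assms(1) by (auto simp: valid_mech_def)
  have "expect_given_rec1 mu0 rho M s (payoff_P k) a1 \<le> 1 - k" for a1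
    using expect_given_rec1_payoff_P_tested[OF sig2] expect_given_rec1_payoff_P_untested[OF sig2] assms
    by (cases "act1 s a1") auto
  then show ?thesis
    unfolding UP_eq_expect expect_by_rec1 by (rule sum_bprob_mult_le[OF sig1])
qed

definition payoff_A :: "real \<Rightarrow> bool \<Rightarrow> bool \<Rightarrow> bool \<Rightarrow> bool \<Rightarrow> bool \<Rightarrow> real" where
  "payoff_A c w1 w2 e1 e2 x = of_bool x - c * (of_bool e1 + of_bool e2)"

lemma UA_eq_expect: "UA mu0 rho c M s = expect mu0 rho M s (payoff_A c)"
  unfolding UA_def payoff_A_def ..

lemma xhat_Mstar_report2: "xhat Mstar r1 (report2 s a1 o1 a2 w2) \<Longrightarrow> act2 s a1 o1 a2 \<and> w2"
  by (auto simp: Mstar_def report2_def observe_def Let_def split: if_splits)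

lemma payoff_A_Mstar_le:
  assumes "0 \<le> c"
  shows "payoff_A c w1 w2 e1 (act2 s a1 o1 a2) (xhat Mstar r1 (report2 s a1 o1 a2 w2))
    \<le> of_bool (e1 \<or> act2 s a1 o1 a2) * (of_bool w2 - c)"
  using xhat_Mstar_report2[of r1 s a1 o1 a2 w2] assms
  by (cases e1; cases "act2 s a1 o1 a2"; cases w2) (auto simp: payoff_A_def)

lemma UA_Mstar_le:
  assumes "0 \<le> mu0" "mu0 \<le> 1" "0 \<le> rho" "rho \<le> 1" "0 \<le> c" "c \<le> mu2_empty mu0 rho"
  shows "UA mu0 rho c Mstar s \<le> mu2_empty mu0 rho - c"
proof -
  have sig2: "\<And>r. 0 \<le> sig2 Mstar r" "\<And>r. sig2 Mstar r \<le> 1"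
    by (simp_all add: Mstar_def)
  have "UA mu0 rho c Mstar s = expect_given_rec1 mu0 rho Mstar s (payoff_A c) False"
    by (simp add: UA_eq_expect expect_by_rec1 Mstar_def sum_bprob_0)
  also have "\<dots> \<le> mu2_empty mu0 rho - c"
  proof (cases "act1 s False")
    case True
    have "expect_given_rec1 mu0 rho Mstar s (payoff_A c) False
        \<le> (\<Sum>w1\<in>UNIV. \<Sum>w2\<in>UNIV. prior mu0 rho w1 w2 * (of_bool w2 - c))"
    proof (rule expect_given_rec1_le[OF sig2])
      fix w1 a2
      show "expect_state2 mu0 rho Mstar s (payoff_A c) False w1 a2
          \<le> (\<Sum>w2\<in>UNIV. prior mu0 rho w1 w2 * (of_bool w2 - c))"
        unfolding expect_state2_def Let_def
        by (intro sum_prior_mult_mono assms)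
          (use payoff_A_Mstar_le[OF assms(5), of _ _ True] True in simp)
    qed
    then show ?thesis by (simp only: sum_prior_of_bool_state2_minus)
  next
    case False
    let ?e2 = "act2 s False None True"
    have "expect_given_rec1 mu0 rho Mstar s (payoff_A c) False
        = (\<Sum>w1\<in>UNIV. \<Sum>w2\<in>UNIV. prior mu0 rho w1 w2 *
            payoff_A c w1 w2 False ?e2 (xhat Mstar None (report2 s False None True w2)))"
      by (simp add: expect_given_rec1_untested[OF False] Mstar_def sum_bprob_1)
    also have "\<dots> \<le> (\<Sum>w1\<in>UNIV. \<Sum>w2\<in>UNIV. prior mu0 rho w1 w2 * (of_bool ?e2 * (of_bool w2 - c)))"
      by (intro sum_prior_mult_mono2 assms)
        (use payoff_A_Mstar_le[OF assms(5), of _ _ False] in simp)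
    also have "\<dots> \<le> mu2_empty mu0 rho - c"
      using assms by (cases ?e2) (simp_all add: sum_prior_of_bool_state2_minus)
    finally show ?thesis .
  qed
  finally show ?thesis .
qed

lemma UA_Mstar_obedient: "UA mu0 rho c Mstar obedient = mu2_empty mu0 rho - c"
  by (simp add: UA_def expect_def Let_def sum_UNIV_bool Mstar_def obedient_def bprob_def prior_def
      mu2_empty_def algebra_simps)

lemma UP_Mstar_obedient: "UP mu0 rho k Mstar obedient = 1 - k"
  by (simp add: UP_def expect_def Let_def sum_UNIV_bool Mstar_def obedient_def bprob_def prior_def
      algebra_simps)

lemma outcome_prob_Mstar_obedient: "outcome_prob mu0 rho Mstar obedient oc = baseline_prob mu0 rho oc"
  by (cases oc) (auto simp: outcome_prob_def baseline_prob_def expect_def Let_def sum_UNIV_bool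
      Mstar_def obedient_def bprob_def prior_def)

theorem lemmaC2:
  fixes mu0 rho c k :: real
  assumes "0 < mu0" "mu0 < 1" "1/2 < rho" "rho < 1" "0 < c" "0 < k"
    and "1 - rho < k" "k \<le> min (mu2_empty mu0 rho) (1 - mu2_empty mu0 rho)"
    and "c \<le> mu2_empty mu0 rho"
  shows "best_response mu0 rho c Mstar obedient
    \<and> (\<forall>oc. outcome_prob mu0 rho Mstar obedient oc = baseline_prob mu0 rho oc)
    \<and> (\<forall>M s. valid_mech M \<longrightarrow> best_response mu0 rho c M s \<longrightarrow>
           UP mu0 rho k M s \<le> UP mu0 rho k Mstar obedient)"
proof (intro conjI allI impI)
  show "best_response mu0 rho c Mstar obedient"
    unfolding best_response_def UA_Mstar_obedient
    using UA_Mstar_le assms by auto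
  show "outcome_prob mu0 rho Mstar obedient oc = baseline_prob mu0 rho oc" for oc
    by (rule outcome_prob_Mstar_obedient)
  show "UP mu0 rho k M s \<le> UP mu0 rho k Mstar obedient" if "valid_mech M" for M s
    unfolding UP_Mstar_obedient
    using UP_le_first_best[OF that] assms by auto
qed

end
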